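(* Let $N\ge 2$ be an integer, let $C>0$, and let $q,s,k\in[0,1]$ with $q>s$. Define $\Phi:[0,1]\to[0,1]$ by $$\Phi(b,0)=\frac{[qb+s(1-b)](1-k)}{[qb+s(1-b)](1-k)+[(1-q)b+(1-s)(1-b)]}=\frac{[qb+s(1-b)](1-k)}{1-[qb+s(1-b)]k},$$ and define functions $J_l,A_l:[0,1]\to\mathbb{R}$ by backward recursion: $J_{N-1}(b)=(1-kb)C$, and for $l=N-2,N-3,\dots,0$, $$A_l(b)=(1-kb)C+\big(bq+(1-b)s\big)k\,J_{l+1}(1)+\big(1-(bq+(1-b)s)k\big)\,J_{l+1}(\Phi(b,0)),\qquad J_l(b)=\min\{C,A_l(b)\}.$$ Then for each $l\in\{0,1,\dots,N-2\}$, the function $b\mapsto A_l(b)$ is piecewise linear and concave on $[0,1]$.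
   Context: This is the dynamic program of a finite-horizon POMDP for relay selection: $b\in[0,1]$ is the belief (conditional probability given past acknowledgement history) that the current relay link is good; $q$ is the probability a good link stays good, $s$ the probability a bad link becomes good, $k$ the probability an acknowledgement is received when the link is good (it is never received when the link is bad); $C$ is the penalty for a packet loss or for exploring and switching; $\Phi(b,0)$ is the Bayesian belief update after an acknowledgement failure (after an acknowledgement success the belief becomes $1$). $J_l$ is the optimal expected cost-to-go at time $l$, $C$ is the cost of exploring/switching, and $A_l$ is the expected cost of continuing on the current link. *)

theory Defs
  imports "HOL-Analysis.Analysis"
begin

text \<open>Bayesian belief update after an acknowledgement failure, Phi(b,0).\<close>
definition Phi :: "real \<Rightarrow> real \<Rightarrow> real \<Rightarrow> real \<Rightarrow> real" where
  "Phi q s k b =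
     ((q*b + s*(1-b))*(1-k)) /
     ((q*b + s*(1-b))*(1-k) + ((1-q)*b + (1-s)*(1-b)))"

text \<open>Jr q s k c m = J_{N-1-m}: the cost-to-go with m steps remaining after the last one.\<close>
fun Jr :: "real \<Rightarrow> real \<Rightarrow> real \<Rightarrow> real \<Rightarrow> nat \<Rightarrow> real \<Rightarrow> real" where
  "Jr q s k c 0 b = (1 - k*b) * c"
| "Jr q s k c (Suc m) b =
     min c ((1 - k*b) * c + (b*q + (1-b)* s) * k * Jr q s k c m 1
            + (1 - (b*q + (1-b)* s) * k) * Jr q s k c m (Phi q s k b))"

definition J :: "real \<Rightarrow> real \<Rightarrow> real \<Rightarrow> real \<Rightarrow> nat \<Rightarrow> nat \<Rightarrow> real \<Rightarrow> real" where
  "J q s k c N l b = Jr q s k c (N - 1 - l) b"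

text \<open>A_l for horizon N (meaningful for l \<le> N-2).\<close>
definition A :: "real \<Rightarrow> real \<Rightarrow> real \<Rightarrow> real \<Rightarrow> nat \<Rightarrow> nat \<Rightarrow> real \<Rightarrow> real" where
  "A q s k c N l b =
     (1 - k*b) * c + (b*q + (1-b)* s) * k * J q s k c N (l+1) 1
     + (1 - (b*q + (1-b)* s) * k) * J q s k c N (l+1) (Phi q s k b)"

definition piecewise_linear_on :: "real \<Rightarrow> real \<Rightarrow> (real \<Rightarrow> real) \<Rightarrow> bool" where
  "piecewise_linear_on a b f \<longleftrightarrow>
     (\<exists>P. finite P \<and> a \<in> P \<and> b \<in> P \<and> P \<subseteq> {a..b} \<and>
        (\<forall>x\<in>P. \<forall>y\<in>P. x < y \<and> {x<..<y} \<inter> P = {} \<longrightarrow>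
            (\<exists>m c. \<forall>t\<in>{x..y}. f t = m*t + c)))"

end

theory Submission
  imports Defs
begin

text \<open>Every \<open>J\<^sub>l\<close> and \<open>A\<^sub>l\<close> coincides on \<open>[0,1]\<close> with the lower envelope of finitely many
  lines. Taking the minimum with \<open>C\<close> and adding affine terms preserve this, and the only
  nonlinear term \<open>(1 - p k) J(\<Phi>(b,0))\<close>, with \<open>p = bq + (1-b)s\<close>, is the perspective
  \<open>D(b) J(N(b)/D(b))\<close> of \<open>J\<close> for affine \<open>N(b) = p(1-k)\<close> and \<open>D(b) = 1 - pk\<close>, which sends
  the line \<open>z \<mapsto> mz + c\<close> to the line \<open>b \<mapsto> m N(b) + c D(b)\<close>. A lower envelope of finitely many
  lines is concave, and it is affine between consecutive crossing points of its lines.\<close>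

definition lower_envelope :: "(real \<times> real) set \<Rightarrow> real \<Rightarrow> real" where
  "lower_envelope L x = Min ((\<lambda>(m, c). m * x + c) ` L)"

definition lower_envelope_on :: "real set \<Rightarrow> (real \<Rightarrow> real) \<Rightarrow> bool" where
  "lower_envelope_on I f \<longleftrightarrow>
     (\<exists>L. finite L \<and> L \<noteq> {} \<and> (\<forall>x\<in>I. f x = lower_envelope L x))"

lemma lower_envelope_le:
  assumes "finite L" and "(m, c) \<in> L"
  shows "lower_envelope L x \<le> m * x + c"
  unfolding lower_envelope_def using assms by (intro Min_le) force+

lemma lower_envelope_attained:
  assumes "finite L" and "L \<noteq> {}"
  obtains m c where "(m, c) \<in> L" and "lower_envelope L x = m * x + c"
proof -
  have "lower_envelope L x \<in> (\<lambda>(m, c). m * x + c) ` L"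
    unfolding lower_envelope_def using assms by (intro Min_in) auto
  then show thesis using that by auto
qed

lemma lower_envelope_transform:
  assumes "finite L" and "L \<noteq> {}" and "mono h"
    and "\<And>m c. (m, c) \<in> L \<Longrightarrow> (case T (m, c) of (m', c') \<Rightarrow> m' * y + c') = h (m * x + c)"
  shows "lower_envelope (T ` L) y = h (lower_envelope L x)"
proof -
  have "(\<lambda>(m', c'). m' * y + c') ` T ` L = h ` (\<lambda>(m, c). m * x + c) ` L"
    unfolding image_image using assms(4) by (intro image_cong) auto
  then show ?thesis
    unfolding lower_envelope_def using assms(1-3) by (simp add: mono_Min_commute)
qed

lemma lower_envelope_onI:
  assumes "finite L" and "L \<noteq> {}" and "\<And>x. x \<in> I \<Longrightarrow> f x = lower_envelope L x"
  shows "lower_envelope_on I f"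
  unfolding lower_envelope_on_def using assms by blast

lemma lower_envelope_on_cong:
  assumes "lower_envelope_on I f" and "\<And>x. x \<in> I \<Longrightarrow> g x = f x"
  shows "lower_envelope_on I g"
  using assms unfolding lower_envelope_on_def by auto

lemma lower_envelope_on_affine: "lower_envelope_on I (\<lambda>x. m * x + c)"
  by (rule lower_envelope_onI[of "{(m, c)}"]) (simp_all add: lower_envelope_def)

lemma lower_envelope_on_min:
  assumes "lower_envelope_on I f" and "lower_envelope_on I g"
  shows "lower_envelope_on I (\<lambda>x. min (f x) (g x))"
proof -
  obtain L where L: "finite L" "L \<noteq> {}" "\<forall>x\<in>I. f x = lower_envelope L x"
    using assms(1) unfolding lower_envelope_on_def by blast
  obtain M where M: "finite M" "M \<noteq> {}" "\<forall>x\<in>I. g x = lower_envelope M x"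
    using assms(2) unfolding lower_envelope_on_def by blast
  show ?thesis
    by (rule lower_envelope_onI[of "L \<union> M"])
      (use L M in \<open>simp_all add: lower_envelope_def image_Un Min_Un\<close>)
qed

lemma lower_envelope_on_add_affine:
  assumes "lower_envelope_on I f"
  shows "lower_envelope_on I (\<lambda>x. f x + (\<alpha> * x + \<beta>))"
proof -
  obtain L where L: "finite L" "L \<noteq> {}" "\<forall>x\<in>I. f x = lower_envelope L x"
    using assms unfolding lower_envelope_on_def by blast
  let ?T = "\<lambda>(m, c). (m + \<alpha>, c + \<beta>)"
  have "lower_envelope (?T ` L) x = lower_envelope L x + (\<alpha> * x + \<beta>)" for x
    by (rule lower_envelope_transform) (use L in \<open>auto simp: mono_def algebra_simps\<close>)
  then show ?thesis
    using L by (intro lower_envelope_onI[of "?T ` L"]) auto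
qed

lemma lower_envelope_on_perspective:
  fixes N D :: "real \<Rightarrow> real"
  assumes "lower_envelope_on K f"
    and N: "\<And>x. N x = n1 * x + n0" and D: "\<And>x. D x = d1 * x + d0"
    and dom: "\<And>x. x \<in> I \<Longrightarrow> D x > 0 \<and> N x / D x \<in> K \<or> D x = 0 \<and> N x = 0"
  shows "lower_envelope_on I (\<lambda>x. D x * f (N x / D x))"
proof -
  obtain L where L: "finite L" "L \<noteq> {}" "\<forall>z\<in>K. f z = lower_envelope L z"
    using assms(1) unfolding lower_envelope_on_def by blast
  let ?T = "\<lambda>(m, c). (m * n1 + c * d1, m * n0 + c * d0)"
  have "D x * f (N x / D x) = lower_envelope (?T ` L) x" if "x \<in> I" for x
  proof -
    have "lower_envelope (?T ` L) x = D x * lower_envelope L (N x / D x)"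
    proof (rule lower_envelope_transform)
      show "mono (\<lambda>v. D x * v)"
        using dom[OF that] by (auto intro: monoI mult_left_mono)
      fix m c
      have "(case ?T (m, c) of (m', c') \<Rightarrow> m' * x + c') = m * N x + c * D x"
        by (simp add: N D algebra_simps)
      also have "\<dots> = D x * (m * (N x / D x) + c)"
        using dom[OF that] by (auto simp: field_simps)
      finally show "(case ?T (m, c) of (m', c') \<Rightarrow> m' * x + c') = D x * (m * (N x / D x) + c)" .
    qed (use L in auto)
    then show ?thesis
      using dom[OF that] L(3) by auto
  qed
  then show ?thesis
    using L by (intro lower_envelope_onI[of "?T ` L"]) auto
qed

lemma lower_envelope_on_imp_concave_on:
  assumes "lower_envelope_on I f" and "convex I"
  shows "concave_on I f"
proof -
  obtain L where L: "finite L" "L \<noteq> {}" "\<forall>x\<in>I. f x = lower_envelope L x"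
    using assms(1) unfolding lower_envelope_on_def by blast
  show ?thesis
    unfolding concave_on_iff
  proof (intro conjI ballI allI impI)
    fix x y u v :: real
    assume xy: "x \<in> I" "y \<in> I" and uv: "0 \<le> u" "0 \<le> v" "u + v = 1"
    define z where "z = u * x + v * y"
    have z: "z \<in> I"
      unfolding z_def using convexD[OF assms(2) xy uv] by simp
    obtain m c where mc: "(m, c) \<in> L" "lower_envelope L z = m * z + c"
      using lower_envelope_attained[OF L(1,2)] by blast
    have "u * f x + v * f y \<le> u * (m * x + c) + v * (m * y + c)"
      using L xy uv mc(1) by (intro add_mono mult_left_mono) (auto intro: lower_envelope_le)
    also have "\<dots> = m * z + (u + v) * c"
      by (simp add: z_def algebra_simps)
    also have "\<dots> = m * z + c"
      using uv by simp
    also have "\<dots> = f z"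
      using L(3) z mc(2) by simp
    finally show "u * f x + v * f y \<le> f (u *\<^sub>R x + v *\<^sub>R y)"
      by (simp add: z_def)
  qed (fact assms(2))
qed

lemma crossing_point_between:
  fixes m c m' c' t0 t :: real
  assumes "m * t0 + c \<le> m' * t0 + c'" and "m' * t + c' < m * t + c"
  shows "m \<noteq> m'" and "(c' - c) / (m - m') \<in> {min t0 t..max t0 t} - {t}"
proof -
  have le: "(m - m') * t0 \<le> c' - c" and gt: "c' - c < (m - m') * t"
    using assms by (simp_all add: algebra_simps)
  show "m \<noteq> m'"
    using le gt by auto
  then consider "m < m'" | "m' < m"
    by linarith
  then show "(c' - c) / (m - m') \<in> {min t0 t..max t0 t} - {t}"
  proof cases
    case 1
    then have "(c' - c) / (m - m') \<le> t0" "t < (c' - c) / (m - m')"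
      using le gt by (simp_all add: neg_divide_le_eq neg_less_divide_eq mult.commute)
    then show ?thesis by auto
  next
    case 2
    then have "t0 \<le> (c' - c) / (m - m')" "(c' - c) / (m - m') < t"
      using le gt by (simp_all add: le_divide_eq divide_less_eq mult.commute)
    then show ?thesis by auto
  qed
qed

lemma lower_envelope_on_imp_piecewise_linear_on:
  assumes "lower_envelope_on {a..b} f" and "a \<le> b"
  shows "piecewise_linear_on a b f"
proof -
  obtain L where L: "finite L" "L \<noteq> {}" "\<forall>x\<in>{a..b}. f x = lower_envelope L x"
    using assms(1) unfolding lower_envelope_on_def by blast
  \<comment> \<open>pairs of parallel lines only add the harmless junk crossing point \<open>0\<close>\<close>
  define R where "R = (\<lambda>((m, c), (m', c')). (c' - c) / (m - m')) ` (L \<times> L)"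
  define P where "P = {a, b} \<union> ({a..b} \<inter> R)"
  have "\<exists>m c. \<forall>t\<in>{x..y}. f t = m * t + c"
    if xy: "x \<in> P" "y \<in> P" "x < y" "{x<..<y} \<inter> P = {}" for x y
  proof -
    have "a \<le> x" "y \<le> b"
      using xy(1,2) assms(2) unfolding P_def by auto
    define t0 where "t0 = (x + y) / 2"
    have t0: "x < t0" "t0 < y"
      using xy(3) unfolding t0_def by auto
    obtain m c where mc: "(m, c) \<in> L" "lower_envelope L t0 = m * t0 + c"
      using lower_envelope_attained[OF L(1,2)] by blast
    have "lower_envelope L t = m * t + c" if t: "t \<in> {x..y}" for t
    proof -
      obtain m' c' where mc': "(m', c') \<in> L" "lower_envelope L t = m' * t + c'"
        using lower_envelope_attained[OF L(1,2)] by blast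
      have "m * t + c \<le> m' * t + c'"
      proof (rule ccontr)
        assume "\<not> m * t + c \<le> m' * t + c'"
        moreover have "m * t0 + c \<le> m' * t0 + c'"
          using lower_envelope_le[OF L(1) mc'(1), of t0] mc(2) by simp
        ultimately have "(c' - c) / (m - m') \<in> {min t0 t..max t0 t} - {t}"
          by (intro crossing_point_between) auto
        then have "(c' - c) / (m - m') \<in> {x<..<y}"
          using t t0 by auto
        moreover have "(c' - c) / (m - m') \<in> R"
          unfolding R_def using mc(1) mc'(1) by force
        ultimately show False
          using xy(4) \<open>a \<le> x\<close> \<open>y \<le> b\<close> unfolding P_def by auto
      qed
      then show ?thesis
        using lower_envelope_le[OF L(1) mc(1), of t] mc'(2) by simp
    qed
    then show ?thesis
      using L(3) \<open>a \<le> x\<close> \<open>y \<le> b\<close> by (intro exI) auto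
  qed
  moreover have "finite P"
    unfolding P_def R_def using L(1) by auto
  ultimately show ?thesis
    unfolding piecewise_linear_on_def using assms(2) by (intro exI[of _ P]) (auto simp: P_def)
qed

lemma Phi_eq_divide:
  "Phi q s k b = (b * q + (1 - b) * s) * (1 - k) / (1 - (b * q + (1 - b) * s) * k)"
  unfolding Phi_def by (simp add: algebra_simps)

lemma belief_update_cases:
  fixes p k :: real
  assumes "p \<in> {0..1}" and "k \<in> {0..1}"
  shows "1 - p * k > 0 \<and> p * (1 - k) / (1 - p * k) \<in> {0..1} \<or> 1 - p * k = 0 \<and> p * (1 - k) = 0"
proof -
  have "p * k \<le> 1"
    using assms by (auto intro: mult_le_one)
  moreover have "0 \<le> p * (1 - k)"
    using assms by simp
  moreover have "p * (1 - k) \<le> 1 - p * k"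
    using assms by (simp add: algebra_simps)
  ultimately show ?thesis
    by (cases "p * k = 1") auto
qed

lemma convex_combination_in_unit_interval:
  fixes b q s :: real
  assumes "b \<in> {0..1}" and "q \<in> {0..1}" and "s \<in> {0..1}"
  shows "b * q + (1 - b) * s \<in> {0..1}"
proof -
  have "b * q \<le> b" and "(1 - b) * s \<le> 1 - b"
    using assms by (auto intro: mult_left_le)
  then show ?thesis
    using assms by auto
qed

lemma lower_envelope_on_Bellman_continuation:
  fixes q s k C :: real
  assumes "q \<in> {0..1}" and "s \<in> {0..1}" and "k \<in> {0..1}"
    and "lower_envelope_on {0..1} g"
  shows "lower_envelope_on {0..1} (\<lambda>b. (1 - k * b) * C + (b * q + (1 - b) * s) * k * g 1
           + (1 - (b * q + (1 - b) * s) * k) * g (Phi q s k b))"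
proof -
  define p where "p b = b * q + (1 - b) * s" for b
  have "lower_envelope_on {0..1} (\<lambda>b. (1 - p b * k) * g (p b * (1 - k) / (1 - p b * k)))"
  proof (rule lower_envelope_on_perspective[OF assms(4)])
    show "p b * (1 - k) = ((q - s) * (1 - k)) * b + s * (1 - k)" for b
      by (simp add: p_def algebra_simps)
    show "1 - p b * k = (- (q - s) * k) * b + (1 - s * k)" for b
      by (simp add: p_def algebra_simps)
    show "1 - p b * k > 0 \<and> p b * (1 - k) / (1 - p b * k) \<in> {0..1}
          \<or> 1 - p b * k = 0 \<and> p b * (1 - k) = 0" if "b \<in> {0..1}" for b
      using belief_update_cases convex_combination_in_unit_interval assms(1-3) that
      unfolding p_def by blast
  qed
  then have "lower_envelope_on {0..1} (\<lambda>b. (1 - p b * k) * g (p b * (1 - k) / (1 - p b * k))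
               + (((q - s) * k * g 1 - k * C) * b + (C + s * k * g 1)))"
    by (rule lower_envelope_on_add_affine)
  then show ?thesis
    by (rule lower_envelope_on_cong) (simp add: Phi_eq_divide p_def algebra_simps)
qed

lemma lower_envelope_on_Jr:
  fixes q s k C :: real
  assumes "q \<in> {0..1}" and "s \<in> {0..1}" and "k \<in> {0..1}"
  shows "lower_envelope_on {0..1} (Jr q s k C m)"
proof (induction m)
  case 0
  show ?case
    using lower_envelope_on_affine[of _ "- k * C" C]
    by (rule lower_envelope_on_cong) (simp add: algebra_simps)
next
  case (Suc m)
  show ?case
    using lower_envelope_on_min[OF lower_envelope_on_affine[of _ 0 C]
        lower_envelope_on_Bellman_continuation[OF assms Suc]]
    by simp
qed

theorem proposition1:
  fixes N :: nat and C q s k :: real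
  assumes "N \<ge> 2" and "C > 0"
    and "q \<in> {0..1}" and "s \<in> {0..1}" and "k \<in> {0..1}" and "q > s"
  shows "\<forall>l \<le> N - 2.
           piecewise_linear_on 0 1 (A q s k C N l) \<and> concave_on {0..1} (A q s k C N l)"
proof (intro allI impI)
  fix l
  have "lower_envelope_on {0..1} (A q s k C N l)"
    unfolding A_def J_def
    by (rule lower_envelope_on_Bellman_continuation[OF assms(3-5) lower_envelope_on_Jr[OF assms(3-5)]])
  then show "piecewise_linear_on 0 1 (A q s k C N l) \<and> concave_on {0..1} (A q s k C N l)"
    by (simp add: lower_envelope_on_imp_piecewise_linear_on lower_envelope_on_imp_concave_on)
qed

end
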